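(* Let $d\ge 2$, $0<r<1$, $\rho>0$, let $\mu$ be the uniform probability measure on $S^{d-1}\subset\mathbb{R}^d$, and $k(x,y)=\mathbf 1(\|x-y\|\le r)$. Let $e_1,\dots,e_d$ be the standard basis of $\mathbb{R}^d$. For each $i$, let $v_i:S^{d-1}\to[0,1]$ be the unique measurable map with $v_i=1$ on $M^s_i=\{y\in S^{d-1}:\|y-e_i\|\le r\}$ and, for $x\notin M^s_i$, $$v_i(x)=\frac{\int_{M^s_i}k(x,y)d\mu(y)+\int_{S^{d-1}\setminus M^s_i}v_i(y)k(x,y)d\mu(y)}{\rho+\int_{S^{d-1}}k(x,y)d\mu(y)}.$$ Let $r'\in[0,\pi]$ be the angle subtending a chord of length $r$ on the unit circle. Then the map $F:S^{d-1}\to\mathbb{R}^d$, $F(x)=(v_1(x),\dots,v_d(x))$, is $r'\sqrt d$-injective: for all $x,x'\in S^{d-1}$ with $\|x-x'\|>r'\sqrt d$, we have $F(x)\neq F(x')$.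
   Context: A map $f:X\to Z$ between metric spaces is $\epsilon$-injective if $d(x,x')>\epsilon$ implies $f(x)\neq f(x')$; here $S^{d-1}$ carries the Euclidean ($\ell_2$) distance of $\mathbb{R}^d$. *)

theory Defs
  imports "HOL-Analysis.Analysis"
begin

text \<open>Uniform (normalized surface) probability measure on the unit sphere of
  a Euclidean space: the push-forward of the uniform probability measure on the
  open unit ball under radial projection x \<mapsto> x / norm x.\<close>
definition sphere_uniform :: "'a::euclidean_space measure" where
  "sphere_uniform = distr (uniform_measure lborel (ball 0 1)) borel (\<lambda>x. x /\<^sub>R norm x)"

definition ball_kernel :: "real \<Rightarrow> 'a::euclidean_space \<Rightarrow> 'a \<Rightarrow> real" where
  "ball_kernel r x y = (if norm (x - y) \<le> r then 1 else 0)"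

definition chord_angle :: "real \<Rightarrow> real" where
  "chord_angle r = 2 * arcsin (r / 2)"

end

theory Submission
  imports Defs "HOL-Probability.Probability_Measure"
begin

text \<open>Fix one coordinate solution \<open>v\<close> with cap centre \<open>e\<close>, and a unit vector \<open>n\<close> with
  \<open>e \<bullet> n > r/2\<close>. Let \<open>\<sigma>\<close> be the reflection in the hyperplane orthogonal to \<open>n\<close>. Since the
  uniform measure on the sphere is \<open>\<sigma>\<close>-invariant, \<open>gap = v - v \<circ> \<sigma>\<close> satisfies on the half-sphere
  \<open>y \<bullet> n > 0\<close> an integral equation whose kernel \<open>k z y - k z (\<sigma> y)\<close> is nonnegative. A minimum
  principle gives \<open>gap \<ge> 0\<close> there, and a strong maximum principle (the uniform measure charges
  every open cap) gives \<open>gap > 0\<close> off the cap at height above \<open>r/2\<close>.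

  If \<open>(x - x') \<bullet> e > r\<close> for unit vectors \<open>x, x'\<close>, then \<open>n = sgn (x - x')\<close> is admissible and
  \<open>\<sigma> x = x'\<close>, so \<open>v x > v x'\<close>; the cases where \<open>x\<close> or \<open>x'\<close> lie in the cap are elementary.
  Finally, \<open>norm (x - x') > r' * sqrt d\<close> forces some coordinate to differ by more than
  \<open>r' \<ge> r\<close>, and the solution for that coordinate separates \<open>x\<close> from \<open>x'\<close>. The argument works
  in every dimension.\<close>

section \<open>Invariance of Lebesgue measure under orthogonal maps\<close>

lemma linear_borel_measurable:
  fixes f :: "'a::euclidean_space \<Rightarrow> 'b::euclidean_space"
  shows "linear f \<Longrightarrow> f \<in> borel_measurable borel"
  by (intro borel_measurable_continuous_onI linear_continuous_on
      linear_conv_bounded_linear[THEN iffD1])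

lemma orthogonal_transformation_borel_measurable:
  fixes f :: "'a::euclidean_space \<Rightarrow> 'b::euclidean_space"
  shows "orthogonal_transformation f \<Longrightarrow> f \<in> borel_measurable borel"
  by (simp add: linear_borel_measurable orthogonal_transformation_linear)

lemma lborel_distr_vec_reindex:
  fixes p :: "'m::finite \<Rightarrow> 'n::finite"
  assumes p: "bij p"
  shows "distr lborel borel (\<lambda>x::real^'n. \<chi> j. x $ p j) = lborel"
proof (rule lborel_eqI[symmetric])
  define q where "q = inv p"
  have pq: "p (q i) = i" "q (p j) = j" for i j
    using p by (simp_all add: q_def bij_is_surj[THEN surj_f_inv_f] bij_is_inj[THEN inv_f_f])
  have lin: "linear (\<lambda>x::real^'n. \<chi> j. x $ p j)"
    by (rule linearI) (simp_all add: vec_eq_iff)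
  fix l u :: "real^'m"
  assume lu: "\<And>b. b \<in> Basis \<Longrightarrow> l \<bullet> b \<le> u \<bullet> b"
  have le: "l $ j \<le> u $ j" for j
    using lu[of "axis j 1"] by (auto simp: Basis_vec_def inner_axis)
  have "(\<lambda>x::real^'n. \<chi> j. x $ p j) -` box l u = box (\<chi> i. l $ q i) (\<chi> i. u $ q i)"
    by (auto simp: mem_box_cart) (metis pq)+
  then have "emeasure (distr lborel borel (\<lambda>x::real^'n. \<chi> j. x $ p j)) (box l u)
      = (\<Prod>i\<in>UNIV. ennreal (u $ q i - l $ q i))"
    using le by (simp add: emeasure_distr linear_borel_measurable[OF lin] emeasure_lborel_box_eq
        prod_ennreal cart_eq_inner_axis[symmetric] Basis_vec_def axis_eq_axis
        prod.UNION_disjoint)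
  also have "\<dots> = (\<Prod>j\<in>UNIV. ennreal (u $ j - l $ j))"
    by (rule prod.reindex_bij_witness[where i=p and j=q]) (simp_all add: pq)
  finally show "emeasure (distr lborel borel (\<lambda>x::real^'n. \<chi> j. x $ p j)) (box l u)
      = (\<Prod>b\<in>Basis. (u - l) \<bullet> b)"
    using le by (simp add: prod_ennreal cart_eq_inner_axis[symmetric] Basis_vec_def axis_eq_axis
        prod.UNION_disjoint)
qed simp

lemma orthogonal_transformation_vec_reindex:
  fixes p :: "'m::finite \<Rightarrow> 'n::finite"
  assumes "bij p"
  shows "orthogonal_transformation (\<lambda>x::real^'n. \<chi> j. x $ p j)"
proof -
  have "(\<Sum>j\<in>UNIV. x $ p j * y $ p j) = (\<Sum>i\<in>UNIV. x $ i * y $ i)" for x y :: "real^'n"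
    using assms by (rule sum.reindex_bij_betw)
  then show ?thesis
    by (auto simp: orthogonal_transformation_def inner_vec_def vec_eq_iff intro!: linearI)
qed

lemma lborel_distr_orthogonal_wellorder:
  fixes f :: "real^'n::{finite,wellorder} \<Rightarrow> real^'n::_"
  assumes f: "orthogonal_transformation f"
  shows "distr lborel borel f = lborel"
proof (rule lborel_eqI[symmetric])
  have f_meas: "f \<in> borel_measurable borel"
    using f by (rule orthogonal_transformation_borel_measurable)
  fix l u :: "(real, 'n) vec"
  assume lu: "\<And>b. b \<in> Basis \<Longrightarrow> l \<bullet> b \<le> u \<bullet> b"
  have pre: "f -` box l u = inv f ` box l u"
    using f by (simp add: bij_vimage_eq_inv_image orthogonal_transformation_bij)
  have pre_lmeasurable: "f -` box l u \<in> lmeasurable"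
    unfolding pre by (rule measurable_orthogonal_image[OF orthogonal_transformation_inv[OF f]]) simp
  have "emeasure (distr lborel borel f) (box l u) = emeasure lebesgue (f -` box l u)"
    using measurable_sets_borel[OF f_meas, of "box l u"] by (simp add: emeasure_distr f_meas)
  also have "\<dots> = ennreal (measure lebesgue (f -` box l u))"
    using pre_lmeasurable by (simp add: emeasure_eq_measure2)
  also have "\<dots> = ennreal (measure lebesgue (box l u))"
    unfolding pre by (simp add: measure_orthogonal_image[OF orthogonal_transformation_inv[OF f]])
  also have "\<dots> = emeasure lborel (box l u)"
    using emeasure_lborel_box_finite[of l u] by (simp add: emeasure_eq_ennreal_measure)
  finally show "emeasure (distr lborel borel f) (box l u) = (\<Prod>b\<in>Basis. (u - l) \<bullet> b)"
    using lu by (simp add: emeasure_lborel_box_eq)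
qed simp

text \<open>The library proves invariance of Lebesgue measure under orthogonal maps only for index
  types of class \<open>wellorder\<close>. A copy of a finite type, ordered by \<open>to_nat\<close>, transports it to
  arbitrary finite index types.\<close>

typedef 'a ranked = "UNIV :: 'a set" ..

instance ranked :: (finite) finite
proof
  show "finite (UNIV :: 'a ranked set)"
    unfolding type_definition.univ[OF type_definition_ranked] by simp
qed

instantiation ranked :: (finite) wellorder
begin

definition less_eq_ranked :: "'a ranked \<Rightarrow> 'a ranked \<Rightarrow> bool"
  where "x \<le> y \<longleftrightarrow> to_nat (Rep_ranked x) \<le> to_nat (Rep_ranked y)"

definition less_ranked :: "'a ranked \<Rightarrow> 'a ranked \<Rightarrow> bool"
  where "x < y \<longleftrightarrow> to_nat (Rep_ranked x) < to_nat (Rep_ranked y)"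

instance
proof
  fix P :: "'a ranked \<Rightarrow> bool" and a :: "'a ranked"
  assume step: "\<And>x. (\<And>y. y < x \<Longrightarrow> P y) \<Longrightarrow> P x"
  have "P x" if "to_nat (Rep_ranked x) = k" for k x
    using that
  proof (induction k arbitrary: x rule: less_induct)
    case less
    then show ?case by (auto intro: step simp: less_ranked_def)
  qed
  then show "P a" by blast
qed (auto simp: less_eq_ranked_def less_ranked_def Rep_ranked_inject)

end

lemma bij_Rep_ranked: "bij Rep_ranked" and bij_Abs_ranked: "bij Abs_ranked"
  by (metis UNIV_I Abs_ranked_inverse Rep_ranked_inverse bij_betw_byWitness subsetI)+

lemma lborel_distr_orthogonal:
  fixes f :: "real^'n::finite \<Rightarrow> real^'n"
  assumes f: "orthogonal_transformation f"
  shows "distr lborel borel f = lborel"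
proof -
  define P where "P = (\<lambda>x::real^'n. \<chi> j::'n ranked. x $ Rep_ranked j)"
  define Q where "Q = (\<lambda>y::real^'n ranked. \<chi> i::'n. y $ Abs_ranked i)"
  have P: "orthogonal_transformation P" "distr lborel borel P = lborel"
    unfolding P_def
    by (simp_all only: orthogonal_transformation_vec_reindex[OF bij_Rep_ranked]
        lborel_distr_vec_reindex[OF bij_Rep_ranked])
  have Q: "orthogonal_transformation Q" "distr lborel borel Q = lborel"
    unfolding Q_def
    by (simp_all only: orthogonal_transformation_vec_reindex[OF bij_Abs_ranked]
        lborel_distr_vec_reindex[OF bij_Abs_ranked])
  have g: "orthogonal_transformation (P \<circ> f \<circ> Q)"
    by (intro orthogonal_transformation_compose P Q f)
  have meas: "P \<in> borel_measurable borel" "Q \<in> borel_measurable borel" "f \<in> borel_measurable borel"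
    "P \<circ> f \<circ> Q \<in> borel_measurable borel"
    using P Q f g by (simp_all add: orthogonal_transformation_borel_measurable)
  have f_eq: "Q \<circ> (P \<circ> f \<circ> Q) \<circ> P = f"
    by (simp add: fun_eq_iff P_def Q_def vec_eq_iff Abs_ranked_inverse Rep_ranked_inverse)
  have "lborel = distr (distr (distr lborel borel P) borel (P \<circ> f \<circ> Q)) borel Q"
    by (simp add: P(2) Q(2) lborel_distr_orthogonal_wellorder[OF g])
  also have "\<dots> = distr lborel borel (Q \<circ> (P \<circ> f \<circ> Q) \<circ> P)"
    using meas by (simp add: distr_distr comp_assoc)
  finally show ?thesis
    by (simp only: f_eq)
qed

section \<open>The uniform measure on the sphere\<close>

lemma sphere_uniform_eq_distr_sgn:
  "sphere_uniform =
    distr (uniform_measure lborel (ball 0 1)) borel (sgn :: 'a::euclidean_space \<Rightarrow> 'a)"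
  by (simp add: sphere_uniform_def sgn_div_norm[abs_def])

lemma sets_sphere_uniform [simp, measurable_cong]: "sets sphere_uniform = sets borel"
  by (simp add: sphere_uniform_def)

lemma space_sphere_uniform [simp]: "space sphere_uniform = UNIV"
  by (simp add: sphere_uniform_def)

lemma emeasure_lborel_ball_pos: "0 < r \<Longrightarrow> 0 < emeasure lborel (ball (c::'a::euclidean_space) r)"
  by (simp add: emeasure_ball)

lemma prob_space_sphere_uniform: "prob_space (sphere_uniform :: 'a::euclidean_space measure)"
proof -
  have "emeasure lborel (ball (0::'a) 1) \<noteq> 0" "emeasure lborel (ball (0::'a) 1) \<noteq> \<infinity>"
    using emeasure_lborel_ball_pos[of 1 "0::'a"] emeasure_lborel_ball_finite[of "0::'a" 1] by auto
  then show ?thesis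
    unfolding sphere_uniform_def
    by (intro prob_space.prob_space_distr prob_space_uniform_measure) simp_all
qed

lemma integrable_sphere_uniform_bounded:
  fixes g :: "'a::euclidean_space \<Rightarrow> real"
  assumes "g \<in> borel_measurable borel" "\<And>y. \<bar>g y\<bar> \<le> B"
  shows "integrable sphere_uniform g"
proof -
  interpret prob_space "sphere_uniform :: 'a measure"
    by (rule prob_space_sphere_uniform)
  show ?thesis
    using assms by (intro integrable_const_bound[where B=B]) simp_all
qed

lemma distr_uniform_ball_orthogonal:
  fixes f :: "real^'n::finite \<Rightarrow> real^'n"
  assumes f: "orthogonal_transformation f"
  shows "distr (uniform_measure lborel (ball 0 1)) borel f = uniform_measure lborel (ball 0 1)"
proof (rule measure_eqI)
  have f_meas[measurable]: "f \<in> borel_measurable borel"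
    using f by (rule orthogonal_transformation_borel_measurable)
  fix A :: "(real^'n) set"
  assume "A \<in> sets (distr (uniform_measure lborel (ball 0 1)) borel f)"
  then have A[measurable]: "A \<in> sets borel" by simp
  have "ball 0 1 \<inter> f -` A = f -` (ball 0 1 \<inter> A)"
    using f by (auto simp: orthogonal_transformation_norm)
  then have "emeasure lborel (ball 0 1 \<inter> f -` A) = emeasure (distr lborel borel f) (ball 0 1 \<inter> A)"
    by (simp add: emeasure_distr)
  moreover have "f -` A \<in> sets borel"
    using measurable_sets_borel[OF f_meas A] by simp
  ultimately show "emeasure (distr (uniform_measure lborel (ball 0 1)) borel f) A
      = emeasure (uniform_measure lborel (ball 0 1)) A"
    by (simp add: emeasure_distr lborel_distr_orthogonal[OF f])
qed simp

lemma distr_sphere_uniform_orthogonal: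
  fixes f :: "real^'n::finite \<Rightarrow> real^'n"
  assumes f: "orthogonal_transformation f"
  shows "distr sphere_uniform borel f = sphere_uniform"
proof -
  have f_meas[measurable]: "f \<in> borel_measurable borel"
    using f by (rule orthogonal_transformation_borel_measurable)
  have "f \<circ> sgn = sgn \<circ> f"
    using f by (simp add: fun_eq_iff sgn_div_norm orthogonal_transformation_norm
        orthogonal_transformation_scaleR)
  then have "distr sphere_uniform borel f
      = distr (distr (uniform_measure lborel (ball 0 1)) borel f) borel sgn"
    by (simp add: sphere_uniform_eq_distr_sgn distr_distr)
  then show ?thesis
    by (simp only: distr_uniform_ball_orthogonal[OF f] sphere_uniform_eq_distr_sgn[symmetric])
qed

lemma integral_sphere_uniform_orthogonal:
  fixes f :: "real^'n::finite \<Rightarrow> real^'n" and g :: "real^'n \<Rightarrow> real"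
  assumes f: "orthogonal_transformation f" and g: "g \<in> borel_measurable borel"
  shows "(\<integral>y. g (f y) \<partial>sphere_uniform) = integral\<^sup>L sphere_uniform g"
proof -
  have "f \<in> borel_measurable borel"
    using f by (rule orthogonal_transformation_borel_measurable)
  then have "(\<integral>y. g (f y) \<partial>sphere_uniform) = integral\<^sup>L (distr sphere_uniform borel f) g"
    using g by (simp add: integral_distr)
  then show ?thesis
    by (simp add: distr_sphere_uniform_orthogonal[OF f])
qed

lemma emeasure_sphere_uniform_cap_pos:
  fixes p :: "'a::euclidean_space"
  assumes p: "norm p = 1" and e: "0 < e"
  shows "0 < emeasure sphere_uniform (sphere 0 1 \<inter> ball p e)"
proof -
  let ?C = "sphere 0 1 \<inter> ball p e"
  have "continuous (at (p /\<^sub>R 2)) sgn" and "sgn (p /\<^sub>R 2) = p"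
    using p by (auto intro!: continuous_intros simp: sgn_div_norm)
  then obtain d where d: "0 < d" and near: "\<And>x. dist x (p /\<^sub>R 2) < d \<Longrightarrow> dist (sgn x) p < e"
    using e unfolding continuous_at_eps_delta by metis
  define \<delta> where "\<delta> = min d (1/2)"
  have "ball (p /\<^sub>R 2) \<delta> \<subseteq> ball 0 1 \<inter> sgn -` ?C"
  proof
    fix x assume "x \<in> ball (p /\<^sub>R 2) \<delta>"
    then have x: "dist x (p /\<^sub>R 2) < d" "norm (x - p /\<^sub>R 2) < 1/2"
      by (auto simp: \<delta>_def dist_commute dist_norm)
    have "norm x < 1" and "x \<noteq> 0"
      using x(2) norm_triangle_ineq2[of x "p /\<^sub>R 2"] norm_triangle_ineq3[of x "p /\<^sub>R 2"] p by auto
    then show "x \<in> ball 0 1 \<inter> sgn -` ?C"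
      using near[OF x(1)] by (simp add: norm_sgn dist_commute)
  qed
  moreover have C_meas: "sgn -` ?C \<in> sets borel"
    using measurable_sets_borel[OF borel_measurable_sgn, of ?C] by simp
  ultimately have "emeasure lborel (ball (p /\<^sub>R 2) \<delta>) \<le> emeasure lborel (ball 0 1 \<inter> sgn -` ?C)"
    by (intro emeasure_mono) simp_all
  moreover have "0 < emeasure lborel (ball (p /\<^sub>R 2) \<delta>)"
    using d by (simp add: \<delta>_def emeasure_lborel_ball_pos)
  ultimately have pos: "0 < emeasure lborel (ball 0 1 \<inter> sgn -` ?C)"
    by order
  have "emeasure sphere_uniform ?C = emeasure (uniform_measure lborel (ball 0 1)) (sgn -` ?C)"
    by (simp add: sphere_uniform_eq_distr_sgn emeasure_distr)
  also have "\<dots> = emeasure lborel (ball 0 1 \<inter> sgn -` ?C) / emeasure lborel (ball (0::'a) 1)"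
    using C_meas by simp
  finally show ?thesis
    using pos emeasure_lborel_ball_finite[of "0::'a" 1] by (simp add: ennreal_zero_less_divide)
qed

section \<open>Reflections and geometry of unit vectors\<close>

definition reflection :: "'a::real_inner \<Rightarrow> 'a \<Rightarrow> 'a"
  where "reflection n z = z - (2 * (z \<bullet> n)) *\<^sub>R n"

lemma linear_reflection: "linear (reflection n)"
  by (rule linearI) (simp_all add: reflection_def algebra_simps inner_add_left)

lemma reflection_borel_measurable [measurable]:
  "reflection (n::'a::euclidean_space) \<in> borel_measurable borel"
  by (simp add: linear_borel_measurable linear_reflection)

lemma inner_reflection_normal:
  "norm n = 1 \<Longrightarrow> reflection n z \<bullet> n = - (z \<bullet> n)"
  by (simp add: reflection_def inner_diff_left dot_square_norm)

lemma reflection_reflection [simp]: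
  "norm n = 1 \<Longrightarrow> reflection n (reflection n z) = z"
  by (simp add: reflection_def inner_diff_left dot_square_norm)

lemma orthogonal_transformation_reflection:
  "norm n = 1 \<Longrightarrow> orthogonal_transformation (reflection n)"
  by (simp add: orthogonal_transformation_def linear_reflection reflection_def inner_diff_left
      inner_diff_right dot_square_norm algebra_simps inner_commute)

lemma norm_reflection [simp]: "norm n = 1 \<Longrightarrow> norm (reflection n z) = norm z"
  using orthogonal_transformation_norm orthogonal_transformation_reflection by blast

lemma reflection_fixpoint: "z \<bullet> n = 0 \<Longrightarrow> reflection n z = z"
  by (simp add: reflection_def)

lemma norm_diff_reflection_sq:
  assumes "norm n = 1"
  shows "(norm (z - reflection n y))\<^sup>2 = (norm (z - y))\<^sup>2 + 4 * (z \<bullet> n) * (y \<bullet> n)"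
proof -
  have "n \<bullet> n = 1"
    using assms by (simp add: dot_square_norm)
  then show ?thesis
    by (simp add: reflection_def power2_norm_eq_inner inner_diff_left inner_diff_right
        algebra_simps inner_commute)
qed

lemma norm_diff_le_reflection:
  assumes "norm n = 1" "0 \<le> z \<bullet> n" "0 \<le> y \<bullet> n"
  shows "norm (z - y) \<le> norm (z - reflection n y)"
proof (rule power2_le_imp_le)
  show "(norm (z - y))\<^sup>2 \<le> (norm (z - reflection n y))\<^sup>2"
    using assms by (simp add: norm_diff_reflection_sq)
qed simp

lemma norm_diff_reflection_gt:
  assumes "norm n = 1" "0 \<le> r" "r/2 < z \<bullet> n" "r/2 < y \<bullet> n"
  shows "r < norm (z - reflection n y)"
proof (rule power2_less_imp_less)
  have "r/2 * (r/2) < (z \<bullet> n) * (y \<bullet> n)"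
    using assms by (intro mult_strict_mono) auto
  then have "r\<^sup>2 < 4 * (z \<bullet> n) * (y \<bullet> n)"
    by (simp add: power2_eq_square)
  then show "r\<^sup>2 < (norm (z - reflection n y))\<^sup>2"
    unfolding norm_diff_reflection_sq[OF assms(1)] using zero_le_power2[of "norm (z - y)"]
    by linarith
qed simp

lemma inner_sgn_diff:
  fixes x x' :: "'a::real_inner"
  assumes "norm x = norm x'"
  shows "2 * (x \<bullet> sgn (x - x')) = norm (x - x')"
proof (cases "x = x'")
  case False
  define d where "d = norm (x - x')"
  have d: "0 < d" using False by (simp add: d_def)
  have "x' \<bullet> x' = x \<bullet> x"
    using assms by (simp add: dot_square_norm)
  then have "d\<^sup>2 = 2 * (x \<bullet> x) - 2 * (x \<bullet> x')"
    by (simp add: d_def power2_norm_eq_inner inner_diff_left inner_diff_right inner_commute)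
  then have "2 * (x \<bullet> (x - x')) = d\<^sup>2"
    by (simp add: inner_diff_right)
  moreover have "x \<bullet> sgn (x - x') = (x \<bullet> (x - x')) / d"
    by (simp only: sgn_div_norm d_def[symmetric] inner_scaleR_right) (simp add: divide_inverse)
  ultimately show ?thesis
    using d by (simp add: power2_eq_square d_def)
qed simp

lemma reflection_sgn_diff:
  fixes x x' :: "'a::real_inner"
  assumes "norm x = norm x'"
  shows "reflection (sgn (x - x')) x = x'"
proof (cases "x = x'")
  case False
  then show ?thesis
    using inner_sgn_diff[OF assms]
    by (simp add: reflection_def sgn_div_norm)
qed (simp add: reflection_def)

lemma integral_odd_fold:
  fixes n :: "real^'n::finite" and h g :: "real^'n \<Rightarrow> real"
  assumes n: "norm n = 1"
    and h: "h \<in> borel_measurable borel" "\<And>y. \<bar>h y\<bar> \<le> B" "\<And>y. h (reflection n y) = - h y"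
    and g: "g \<in> borel_measurable borel" "\<And>y. \<bar>g y\<bar> \<le> C"
  shows "(\<integral>y. h y * g y \<partial>sphere_uniform)
    = (\<integral>y. of_bool (0 < y \<bullet> n) * h y * (g y - g (reflection n y)) \<partial>sphere_uniform)"
proof -
  have bounded: "\<bar>c * h y * g z\<bar> \<le> B * C" if "\<bar>c\<bar> \<le> 1" for c y z
  proof -
    have "\<bar>c\<bar> * \<bar>h y\<bar> \<le> 1 * B"
      using that h(2)[of y] by (intro mult_mono) auto
    then have "\<bar>c\<bar> * \<bar>h y\<bar> * \<bar>g z\<bar> \<le> B * C"
      using g(2)[of z] h(2)[of y] by (intro mult_mono) auto
    then show ?thesis
      by (simp add: abs_mult)
  qed
  define pos where "pos y = of_bool (0 < y \<bullet> n) * h y * g y" for y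
  define neg where "neg y = of_bool (y \<bullet> n < 0) * h y * g y" for y
  define neg' where "neg' y = - (of_bool (0 < y \<bullet> n) * h y * g (reflection n y))" for y
  have int: "integrable sphere_uniform pos" "integrable sphere_uniform neg"
    "integrable sphere_uniform neg'"
    unfolding pos_def neg_def neg'_def using h g
    by (auto intro!: integrable_sphere_uniform_bounded[where B="B * C"] bounded)
  have split: "h y * g y = pos y + neg y" for y
  proof (cases "y \<bullet> n = 0")
    case True
    then have "h y = 0"
      using h(3)[of y] by (simp add: reflection_fixpoint)
    then show ?thesis by (simp add: pos_def neg_def)
  qed (auto simp: pos_def neg_def)
  have "(\<integral>y. h y * g y \<partial>sphere_uniform) = (\<integral>y. pos y + neg y \<partial>sphere_uniform)"
    by (simp only: split)
  also have "\<dots> = integral\<^sup>L sphere_uniform pos + integral\<^sup>L sphere_uniform neg"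
    by (rule Bochner_Integration.integral_add[OF int(1,2)])
  also have "integral\<^sup>L sphere_uniform neg = (\<integral>y. neg (reflection n y) \<partial>sphere_uniform)"
    by (rule integral_sphere_uniform_orthogonal[OF orthogonal_transformation_reflection[OF n],
          symmetric])
      (use h(1) g(1) in \<open>simp add: neg_def[abs_def]\<close>)
  also have "\<dots> = integral\<^sup>L sphere_uniform neg'"
    using n by (intro Bochner_Integration.integral_cong)
      (auto simp: neg_def neg'_def h(3) inner_reflection_normal)
  also have "integral\<^sup>L sphere_uniform pos + integral\<^sup>L sphere_uniform neg'
      = (\<integral>y. pos y + neg' y \<partial>sphere_uniform)"
    by (rule Bochner_Integration.integral_add[OF int(1,3), symmetric])
  also have "\<dots> = (\<integral>y. of_bool (0 < y \<bullet> n) * h y * (g y - g (reflection n y)) \<partial>sphere_uniform)"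
    by (simp add: pos_def neg'_def algebra_simps)
  finally show ?thesis .
qed

lemma unit_norm_diff_le_iff:
  fixes y e :: "'a::real_inner"
  assumes "norm y = 1" "norm e = 1" "0 \<le> r"
  shows "norm (y - e) \<le> r \<longleftrightarrow> 1 - r\<^sup>2/2 \<le> y \<bullet> e"
proof -
  have "y \<bullet> y = 1" "e \<bullet> e = 1"
    using assms by (simp_all add: dot_square_norm)
  then have "(norm (y - e))\<^sup>2 = 2 - 2 * (y \<bullet> e)"
    by (simp add: power2_norm_eq_inner inner_diff_left inner_diff_right inner_commute)
  moreover have "norm (y - e) \<le> r \<longleftrightarrow> (norm (y - e))\<^sup>2 \<le> r\<^sup>2"
    using assms(3) by (simp add: abs_le_square_iff[symmetric])
  ultimately show ?thesis
    by auto
qed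

lemma abs_inner_less_of_separated:
  fixes y e n :: "'a::real_inner"
  assumes y: "norm y = 1" and e: "norm e = 1" and n: "norm n = 1" and r: "0 \<le> r"
    and yn: "r/2 < y \<bullet> n" and en: "r/2 < e \<bullet> n" and ye: "r < norm (y - e)"
  shows "\<bar>y \<bullet> e\<bar> < 1 - r\<^sup>2/2"
proof -
  have "(y + e) \<bullet> n \<le> norm (y + e)"
    using norm_cauchy_schwarz[of "y + e" n] n by simp
  then have "r < norm (y - - e)"
    using yn en by (simp add: inner_add_left)
  then show ?thesis
    using ye unit_norm_diff_le_iff[OF y e r] unit_norm_diff_le_iff[of y "- e" r] y e r
    by (auto simp: abs_less_iff)
qed

lemma sphere_step_towards:
  fixes y e n :: "'a::real_inner"
  assumes y: "norm y = 1" and e: "norm e = 1" and n: "norm n = 1" and r: "0 < r"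
    and yn: "r/2 < y \<bullet> n" and en: "r/2 < e \<bullet> n" and ye: "r < norm (y - e)"
  obtains p where "norm p = 1" "r/2 < p \<bullet> n" "y \<bullet> e + r^3 / (2 * (4 + r)) \<le> p \<bullet> e"
    "norm (p - y) \<le> r/2"
proof -
  define t where "t = r/4"
  define N where "N = norm (y + t *\<^sub>R e)"
  define p where "p = (1/N) *\<^sub>R (y + t *\<^sub>R e)"
  define c where "c = y \<bullet> e"
  have c: "\<bar>c\<bar> < 1 - r\<^sup>2/2"
    unfolding c_def using abs_inner_less_of_separated[OF assms(1-3) _ assms(5-7)] r by simp
  have t: "0 < t" "t < 1/2"
    using ye norm_triangle_ineq4[of y e] y e r by (auto simp: t_def)
  have N: "\<bar>1 - N\<bar> \<le> t"
    using norm_triangle_ineq[of y "t *\<^sub>R e"] norm_diff_ineq[of y "t *\<^sub>R e"] y e t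
    by (simp add: N_def abs_le_iff)
  then have N_pos: "0 < N"
    using t by linarith
  have "norm p = 1"
    unfolding p_def using N_pos by (simp add: N_def)
  moreover have "r/2 < p \<bullet> n"
  proof -
    have "r/2 * N \<le> r/2 * (1 + t)"
      using N r by (intro mult_left_mono) auto
    also have "\<dots> < y \<bullet> n + t * (e \<bullet> n)"
      using yn mult_strict_left_mono[OF en t(1)] by (simp add: algebra_simps)
    finally show ?thesis
      using N_pos by (simp add: p_def inner_add_left pos_less_divide_eq mult.commute)
  qed
  moreover have "y \<bullet> e + r^3 / (2 * (4 + r)) \<le> p \<bullet> e"
  proof -
    have "\<bar>c * (1 - N)\<bar> \<le> \<bar>c\<bar> * t"
      using N by (simp add: abs_mult mult_left_mono)
    moreover have "t * (r\<^sup>2/2) \<le> t * (1 - \<bar>c\<bar>)"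
      using c t by (intro mult_left_mono) auto
    ultimately have gain: "t * r\<^sup>2 / 2 \<le> c + t - c * N"
      by (simp add: algebra_simps abs_le_iff)
    have "r^3 / (2 * (4 + r)) = t * r\<^sup>2 / (2 * (1 + t))"
      by (simp add: t_def power2_eq_square power3_eq_cube field_simps)
    also have "\<dots> \<le> t * r\<^sup>2 / 2 / N"
      using N_pos N t by (simp add: divide_simps mult_left_mono)
    also have "\<dots> \<le> (c + t - c * N) / N"
      using divide_right_mono[OF gain, of N] N_pos by simp
    also have "\<dots> = p \<bullet> e - c"
      using N_pos e by (simp add: p_def inner_add_left c_def field_simps dot_square_norm)
    finally show ?thesis
      by (simp add: c_def)
  qed
  moreover have "norm (p - y) \<le> r/2"
  proof -
    have "p - (y + t *\<^sub>R e) = (1/N - 1) *\<^sub>R (y + t *\<^sub>R e)"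
      by (simp add: p_def algebra_simps)
    then have "norm (p - (y + t *\<^sub>R e)) = \<bar>1/N - 1\<bar> * N"
      by (simp add: N_def)
    also have "\<dots> = \<bar>1 - N\<bar>"
      using N_pos by (simp add: abs_mult_pos' field_simps abs_minus_commute)
    finally show ?thesis
      using norm_triangle_ineq[of "p - (y + t *\<^sub>R e)" "t *\<^sub>R e"] N e t
      by (simp add: t_def algebra_simps)
  qed
  ultimately show ?thesis
    using that by blast
qed

lemma sphere_ball_ahead:
  fixes y e n :: "'a::real_inner"
  assumes y: "norm y = 1" and e: "norm e = 1" and n: "norm n = 1" and r: "0 < r"
    and yn: "r/2 < y \<bullet> n" and en: "r/2 < e \<bullet> n" and ye: "r < norm (y - e)"
  obtains p \<epsilon> where "norm p = 1" "0 < \<epsilon>"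
    "\<And>w. w \<in> ball p \<epsilon> \<Longrightarrow> r/2 < w \<bullet> n \<and> norm (y - w) < r \<and> y \<bullet> e + r^3 / (4 * (4 + r)) < w \<bullet> e"
proof -
  define \<kappa> where "\<kappa> = r^3 / (2 * (4 + r))"
  obtain p where p: "norm p = 1" "r/2 < p \<bullet> n" "y \<bullet> e + \<kappa> \<le> p \<bullet> e" "norm (p - y) \<le> r/2"
    using sphere_step_towards[OF assms] unfolding \<kappa>_def by blast
  define \<epsilon> where "\<epsilon> = min (\<kappa>/2) (min (r/2) (p \<bullet> n - r/2))"
  have "0 < \<kappa>"
    using r by (simp add: \<kappa>_def)
  then have \<epsilon>: "0 < \<epsilon>" "\<epsilon> \<le> \<kappa>/2" "\<epsilon> \<le> r/2" "\<epsilon> \<le> p \<bullet> n - r/2"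
    using r p(2) by (auto simp: \<epsilon>_def min_def)
  have "r/2 < w \<bullet> n \<and> norm (y - w) < r \<and> y \<bullet> e + r^3 / (4 * (4 + r)) < w \<bullet> e"
    if "w \<in> ball p \<epsilon>" for w
  proof -
    have wp: "norm (w - p) < \<epsilon>"
      using that by (simp add: dist_norm norm_minus_commute)
    have "\<bar>(w - p) \<bullet> n\<bar> < \<epsilon>" "\<bar>(w - p) \<bullet> e\<bar> < \<epsilon>"
      using Cauchy_Schwarz_ineq2[of "w - p" n] Cauchy_Schwarz_ineq2[of "w - p" e] n e wp by auto
    then have "p \<bullet> n - \<epsilon> < w \<bullet> n" "p \<bullet> e - \<epsilon> < w \<bullet> e"
      by (auto simp: inner_diff_left abs_less_iff)
    moreover have "norm (y - w) < r"
      using norm_triangle_ineq[of "y - p" "p - w"] p(4) wp \<epsilon>(3) by (simp add: norm_minus_commute)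
    moreover have "\<kappa>/2 = r^3 / (4 * (4 + r))"
      by (simp add: \<kappa>_def)
    ultimately show ?thesis
      using p(3) \<epsilon>(2,4) by (intro conjI) linarith+
  qed
  then show ?thesis
    using that p(1) \<epsilon>(1) by blast
qed

lemma divide_add_le_inverse_one_plus:
  fixes \<rho> K :: real
  assumes "0 < \<rho>" "0 \<le> K" "K \<le> 1"
  shows "K / (\<rho> + K) \<le> 1 / (1 + \<rho>)"
proof -
  have "K * (1 + \<rho>) \<le> \<rho> + K"
    using assms by (simp add: algebra_simps mult_left_le)
  then show ?thesis
    using assms by (simp add: divide_simps)
qed

section \<open>Reflection principle for the cap equation\<close>

locale cap_equation =
  fixes r \<rho> :: real and v :: "real^'n::finite \<Rightarrow> real" and e :: "real^'n"
  assumes r_pos: "0 < r" and rho_pos: "0 < \<rho>" and unit_e: "norm e = 1"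
    and v_meas: "v \<in> borel_measurable sphere_uniform"
    and v_range: "\<And>x. x \<in> sphere 0 1 \<Longrightarrow> v x \<in> {0..1}"
    and v_on_cap: "\<And>x. x \<in> sphere 0 1 \<Longrightarrow> norm (x - e) \<le> r \<Longrightarrow> v x = 1"
    and v_off_cap: "\<And>x. x \<in> sphere 0 1 \<Longrightarrow> \<not> norm (x - e) \<le> r \<Longrightarrow>
        v x =
          ((LINT y:{y \<in> sphere 0 1. norm (y - e) \<le> r}|sphere_uniform. ball_kernel r x y)
           + (LINT y:(sphere 0 1 - {y \<in> sphere 0 1. norm (y - e) \<le> r})|sphere_uniform.
                 v y * ball_kernel r x y))
          / (\<rho> + (LINT y:sphere 0 1|sphere_uniform. ball_kernel r x y))"
begin

abbreviation S :: "(real^'n) set" where "S \<equiv> sphere 0 1"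
abbreviation \<mu> :: "(real^'n) measure" where "\<mu> \<equiv> sphere_uniform"
abbreviation k :: "real^'n \<Rightarrow> real^'n \<Rightarrow> real" where "k \<equiv> ball_kernel r"

definition kernel_mass :: "real^'n \<Rightarrow> real"
  where "kernel_mass z = (\<integral>y. indicator S y * k z y \<partial>\<mu>)"

lemma v_borel [measurable]: "v \<in> borel_measurable borel"
  using v_meas measurable_cong_sets[OF sets_sphere_uniform refl, of borel] by simp

lemma v_nonneg: "y \<in> S \<Longrightarrow> 0 \<le> v y" and v_le_one: "y \<in> S \<Longrightarrow> v y \<le> 1"
  using v_range by auto

lemma abs_v_le_one: "y \<in> S \<Longrightarrow> \<bar>v y\<bar> \<le> 1"
  using v_range by auto

lemma sphere_borel [measurable]: "S \<in> sets borel"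
  by (simp add: borel_closed)

lemma ball_kernel_borel [measurable]: "ball_kernel r z \<in> borel_measurable borel"
  unfolding ball_kernel_def by measurable

lemma ball_kernel_nonneg: "0 \<le> k z y"
  by (simp add: ball_kernel_def)

lemma integrable_sphere_kernel: "integrable \<mu> (\<lambda>y. indicator S y * f y * k z y)"
  if "f \<in> borel_measurable borel" "\<And>y. y \<in> S \<Longrightarrow> \<bar>f y\<bar> \<le> 1"
  using that by (intro integrable_sphere_uniform_bounded[where B=1])
    (auto simp: indicator_def ball_kernel_def)

lemma kernel_mass_nonneg: "0 \<le> kernel_mass z"
  unfolding kernel_mass_def
  by (intro Bochner_Integration.integral_nonneg) (simp add: ball_kernel_nonneg)

lemma kernel_mass_le_one: "kernel_mass z \<le> 1"
proof -
  interpret prob_space \<mu>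
    by (rule prob_space_sphere_uniform)
  have "kernel_mass z \<le> (\<integral>y. 1 \<partial>\<mu>)"
    unfolding kernel_mass_def using integrable_sphere_kernel[of "\<lambda>_. 1" z]
    by (intro integral_mono) (auto simp: indicator_def ball_kernel_def)
  then show ?thesis
    using prob_space by simp
qed

lemma fixed_point_off_cap:
  assumes z: "z \<in> S" "\<not> norm (z - e) \<le> r"
  shows "(\<rho> + kernel_mass z) * v z = (\<integral>y. indicator S y * v y * k z y \<partial>\<mu>)"
proof -
  define M where "M = {y \<in> S. norm (y - e) \<le> r}"
  have M_borel [measurable]: "M \<in> sets borel"
  proof -
    have "M = S \<inter> cball e r"
      by (auto simp: M_def dist_norm norm_minus_commute)
    then show ?thesis
      by simp
  qed
  have int_M: "integrable \<mu> (\<lambda>y. indicator M y *\<^sub>R k z y)"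
    by (intro integrable_sphere_uniform_bounded[where B=1])
      (auto simp: indicator_def ball_kernel_def)
  have "\<bar>indicator (S - M) y *\<^sub>R (v y * k z y)\<bar> \<le> 1" for y
    using abs_v_le_one[of y] by (cases "y \<in> S - M") (auto simp: ball_kernel_def)
  then have int_SM: "integrable \<mu> (\<lambda>y. indicator (S - M) y *\<^sub>R (v y * k z y))"
    by (intro integrable_sphere_uniform_bounded[where B=1]) simp_all
  have "v z = ((\<integral>y. indicator M y *\<^sub>R k z y \<partial>\<mu>)
      + (\<integral>y. indicator (S - M) y *\<^sub>R (v y * k z y) \<partial>\<mu>)) / (\<rho> + kernel_mass z)"
    using v_off_cap[OF z] by (simp add: set_lebesgue_integral_def M_def kernel_mass_def)
  also have "(\<integral>y. indicator M y *\<^sub>R k z y \<partial>\<mu>) + (\<integral>y. indicator (S - M) y *\<^sub>R (v y * k z y) \<partial>\<mu>)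
      = (\<integral>y. indicator S y * v y * k z y \<partial>\<mu>)"
    unfolding Bochner_Integration.integral_add[OF int_M int_SM, symmetric]
    by (intro Bochner_Integration.integral_cong) (auto simp: indicator_def M_def v_on_cap)
  finally show ?thesis
    using rho_pos kernel_mass_nonneg[of z] by (simp add: divide_simps mult.commute)
qed

lemma v_off_cap_le:
  assumes z: "z \<in> S" "\<not> norm (z - e) \<le> r"
  shows "v z \<le> 1 / (1 + \<rho>)"
proof -
  have "(\<rho> + kernel_mass z) * v z \<le> kernel_mass z"
    unfolding fixed_point_off_cap[OF z] unfolding kernel_mass_def
    using integrable_sphere_kernel[of v z] integrable_sphere_kernel[of "\<lambda>_. 1" z] abs_v_le_one
    by (intro integral_mono) (auto simp: indicator_def ball_kernel_def v_le_one)
  then have "v z \<le> kernel_mass z / (\<rho> + kernel_mass z)"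
    using rho_pos kernel_mass_nonneg[of z] by (simp add: pos_le_divide_eq mult.commute)
  also have "\<dots> \<le> 1 / (1 + \<rho>)"
    using rho_pos kernel_mass_nonneg kernel_mass_le_one by (rule divide_add_le_inverse_one_plus)
  finally show ?thesis .
qed

end

locale cap_reflection = cap_equation r \<rho> v e
  for r \<rho> :: real and v :: "real^'n::finite \<Rightarrow> real" and e :: "real^'n" +
  fixes n :: "real^'n"
  assumes unit_n: "norm n = 1" and e_n: "r/2 < e \<bullet> n"
begin

abbreviation \<sigma> :: "real^'n \<Rightarrow> real^'n" where "\<sigma> \<equiv> reflection n"

definition gap :: "real^'n \<Rightarrow> real"
  where "gap y = v y - v (\<sigma> y)"

definition gap_kernel :: "real^'n \<Rightarrow> real^'n \<Rightarrow> real"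
  where "gap_kernel z y = of_bool (0 < y \<bullet> n) * (indicator S y * gap y) * (k z y - k z (\<sigma> y))"

lemma gap_borel [measurable]: "gap \<in> borel_measurable borel"
  unfolding gap_def[abs_def] by measurable

lemma norm_reflection_n [simp]: "norm (\<sigma> y) = norm y"
  using unit_n by simp

lemma indicator_sphere_reflection [simp]: "indicator S (\<sigma> y) = (indicator S y :: real)"
  by (simp add: indicator_def)

lemma gap_reflection: "gap (\<sigma> y) = - gap y"
  using unit_n by (simp add: gap_def)

lemma abs_gap_le_one:
  assumes "y \<in> S"
  shows "\<bar>gap y\<bar> \<le> 1"
proof -
  have "\<sigma> y \<in> S"
    using assms by simp
  then show ?thesis
    using v_nonneg[OF assms] v_le_one[OF assms] v_nonneg[of "\<sigma> y"] v_le_one[of "\<sigma> y"]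
    by (simp add: gap_def abs_le_iff)
qed

lemma ball_kernel_reflection [simp]: "k (\<sigma> z) (\<sigma> y) = k z y"
  using unit_n by (simp add: ball_kernel_def linear_diff[OF linear_reflection, symmetric])

lemma ball_kernel_reflection_le: "0 \<le> z \<bullet> n \<Longrightarrow> 0 \<le> y \<bullet> n \<Longrightarrow> k z (\<sigma> y) \<le> k z y"
  using norm_diff_le_reflection[OF unit_n, of z y] by (auto simp: ball_kernel_def)

lemma integral_reflection:
  fixes g :: "real^'n \<Rightarrow> real"
  assumes "g \<in> borel_measurable borel"
  shows "(\<integral>y. g (\<sigma> y) \<partial>\<mu>) = integral\<^sup>L \<mu> g"
  by (rule integral_sphere_uniform_orthogonal[OF orthogonal_transformation_reflection[OF unit_n]
        assms])

lemma kernel_mass_reflection: "kernel_mass (\<sigma> z) = kernel_mass z"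
proof -
  have "kernel_mass (\<sigma> z) = (\<integral>y. indicator S (\<sigma> y) * k (\<sigma> z) (\<sigma> y) \<partial>\<mu>)"
    unfolding kernel_mass_def by (rule integral_reflection[symmetric]) measurable
  then show ?thesis
    by (simp add: kernel_mass_def)
qed

lemma reflection_off_cap:
  assumes "0 \<le> z \<bullet> n" "\<not> norm (z - e) \<le> r"
  shows "\<not> norm (\<sigma> z - e) \<le> r"
  using norm_diff_le_reflection[OF unit_n, of e z] assms e_n r_pos
  by (simp add: norm_minus_commute)

lemma integrable_gap_kernel: "integrable \<mu> (gap_kernel z)"
proof (rule integrable_sphere_uniform_bounded[where B=1])
  show "gap_kernel z \<in> borel_measurable borel"
    unfolding gap_kernel_def[abs_def] by measurable
  show "\<bar>gap_kernel z y\<bar> \<le> 1" for y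
    using abs_gap_le_one[of y] by (auto simp: gap_kernel_def indicator_def ball_kernel_def)
qed

text \<open>Subtract the fixed-point equation at the mirror point \<open>\<sigma> z\<close>, transported back by the
  \<open>\<sigma>\<close>-invariance of \<open>\<mu>\<close>, and fold the lower half-sphere onto the upper one.\<close>
lemma gap_equation:
  assumes z: "z \<in> S" "0 \<le> z \<bullet> n" "\<not> norm (z - e) \<le> r"
  shows "(\<rho> + kernel_mass z) * gap z = integral\<^sup>L \<mu> (gap_kernel z)"
proof -
  have "(\<rho> + kernel_mass z) * v (\<sigma> z) = (\<rho> + kernel_mass (\<sigma> z)) * v (\<sigma> z)"
    by (simp add: kernel_mass_reflection)
  also have "\<dots> = (\<integral>y. indicator S y * v y * k (\<sigma> z) y \<partial>\<mu>)"
    using z reflection_off_cap unit_n by (intro fixed_point_off_cap) auto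
  also have "\<dots> = (\<integral>y. indicator S y * v (\<sigma> y) * k z y \<partial>\<mu>)"
    using integral_reflection[of "\<lambda>y. indicator S y * v y * k (\<sigma> z) y"] by simp
  finally have mirrored: "(\<rho> + kernel_mass z) * v (\<sigma> z) = \<dots>" .
  have int_v\<sigma>: "integrable \<mu> (\<lambda>y. indicator S y * v (\<sigma> y) * k z y)"
    using abs_v_le_one by (intro integrable_sphere_kernel) auto
  have "(\<rho> + kernel_mass z) * gap z
      = (\<integral>y. indicator S y * v y * k z y \<partial>\<mu>) - (\<integral>y. indicator S y * v (\<sigma> y) * k z y \<partial>\<mu>)"
    using fixed_point_off_cap[OF z(1,3)] mirrored by (simp add: gap_def right_diff_distrib)
  also have "\<dots> = (\<integral>y. (indicator S y * gap y) * k z y \<partial>\<mu>)"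
    using integrable_sphere_kernel[of v z] abs_v_le_one int_v\<sigma>
    by (subst Bochner_Integration.integral_diff[symmetric]) (auto simp: gap_def algebra_simps)
  also have "\<dots> = integral\<^sup>L \<mu> (gap_kernel z)"
    unfolding gap_kernel_def
    by (rule integral_odd_fold[OF unit_n, where B=1 and C=1])
      (auto simp: gap_reflection indicator_def abs_gap_le_one ball_kernel_def)
  finally show ?thesis .
qed

lemma gap_kernel_lower_bound:
  assumes "0 \<le> z \<bullet> n" "m \<le> 0" "\<And>y. y \<in> S \<Longrightarrow> 0 < y \<bullet> n \<Longrightarrow> m \<le> gap y"
  shows "m * (indicator S y * k z y) \<le> gap_kernel z y"
proof (cases "y \<in> S \<and> 0 < y \<bullet> n")
  case True
  define d where "d = k z y - k z (\<sigma> y)"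
  have "0 \<le> d" "d \<le> k z y"
    using ball_kernel_reflection_le[of z y] assms(1) True ball_kernel_nonneg[of z "\<sigma> y"]
    by (auto simp: d_def)
  then have "m * k z y \<le> m * d" and "m * d \<le> gap y * d"
    using assms True by (auto intro: mult_left_mono_neg mult_right_mono)
  then show ?thesis
    using True by (simp add: gap_kernel_def d_def)
next
  case False
  then show ?thesis
    using assms(2) ball_kernel_nonneg[of z y] by (auto simp: gap_kernel_def mult_nonpos_nonneg)
qed

lemma gap_lower_bound:
  assumes m: "m \<le> 0" "\<And>y. y \<in> S \<Longrightarrow> 0 < y \<bullet> n \<Longrightarrow> m \<le> gap y"
    and z: "z \<in> S" "0 < z \<bullet> n"
  shows "m / (1 + \<rho>) \<le> gap z"
proof (cases "norm (z - e) \<le> r")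
  case True
  then have "0 \<le> gap z"
    using z v_on_cap v_le_one[of "\<sigma> z"] by (simp add: gap_def)
  moreover have "m / (1 + \<rho>) \<le> 0"
    using m(1) rho_pos by (simp add: divide_nonpos_pos)
  ultimately show ?thesis
    by linarith
next
  case False
  have "m * kernel_mass z = (\<integral>y. m * (indicator S y * k z y) \<partial>\<mu>)"
    by (simp add: kernel_mass_def)
  also have "\<dots> \<le> integral\<^sup>L \<mu> (gap_kernel z)"
    using integrable_sphere_kernel[of "\<lambda>_. 1" z] z(2) m
    by (intro integral_mono integrable_gap_kernel gap_kernel_lower_bound) auto
  also have "\<dots> = (\<rho> + kernel_mass z) * gap z"
    using z False by (simp add: gap_equation)
  finally have "m * (kernel_mass z / (\<rho> + kernel_mass z)) \<le> gap z"
    using rho_pos kernel_mass_nonneg[of z] by (simp add: divide_simps mult.commute)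
  moreover have "m / (1 + \<rho>) \<le> m * (kernel_mass z / (\<rho> + kernel_mass z))"
    using mult_left_mono_neg[OF divide_add_le_inverse_one_plus[OF rho_pos kernel_mass_nonneg
          kernel_mass_le_one] m(1)]
    by simp
  ultimately show ?thesis
    by linarith
qed

text \<open>Minimum principle: at a negative infimum \<open>m\<close> of \<open>gap\<close> over the upper half-sphere,
  \<open>gap_lower_bound\<close> would give the strictly larger lower bound \<open>m / (1 + \<rho>)\<close>.\<close>
lemma gap_nonneg:
  assumes y: "y \<in> S" "0 < y \<bullet> n"
  shows "0 \<le> gap y"
proof (rule ccontr)
  assume "\<not> 0 \<le> gap y"
  define A where "A = {z \<in> S. 0 < z \<bullet> n}"
  define m where "m = Inf (gap ` A)"
  have "bdd_below (gap ` A)"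
    using abs_gap_le_one by (intro bdd_belowI[where m="-1"]) (force simp: A_def)
  then have m_le: "m \<le> gap z" if "z \<in> A" for z
    unfolding m_def using that by (intro cInf_lower) auto
  have "y \<in> A"
    using y by (simp add: A_def)
  then have m_neg: "m < 0"
    using m_le \<open>\<not> 0 \<le> gap y\<close> by force
  have "m / (1 + \<rho>) \<le> m"
    unfolding m_def using \<open>y \<in> A\<close> m_neg m_le
    by (intro cInf_greatest) (auto simp: A_def m_def intro!: gap_lower_bound)
  moreover have "m < m / (1 + \<rho>)"
    using m_neg rho_pos by (simp add: field_simps mult_pos_neg)
  ultimately show False
    by simp
qed

lemma gap_on_cap:
  assumes y: "y \<in> S" "r/2 < y \<bullet> n" "norm (y - e) \<le> r"
  shows "\<rho> / (1 + \<rho>) \<le> gap y"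
proof -
  have "r < norm (e - \<sigma> y)"
    using norm_diff_reflection_gt[OF unit_n] r_pos e_n y(2) by simp
  then have "v (\<sigma> y) \<le> 1 / (1 + \<rho>)"
    using y(1) by (intro v_off_cap_le) (auto simp: norm_minus_commute)
  moreover have "v y = 1"
    using y by (simp add: v_on_cap)
  ultimately show ?thesis
    using rho_pos by (simp add: gap_def field_simps)
qed

text \<open>The integrand \<open>gap_kernel z\<close> is nonnegative, so it vanishes a.e. when \<open>gap z = 0\<close>;
  near \<open>z\<close> and above height \<open>r/2\<close> it equals \<open>gap y\<close>, since there \<open>k z y = 1\<close> and
  \<open>k z (\<sigma> y) = 0\<close>. Such zeros lie off the cap by \<open>gap_on_cap\<close>.\<close>
lemma gap_zero_spreads:
  assumes z: "z \<in> S" "r/2 < z \<bullet> n" "\<not> norm (z - e) \<le> r" and zero: "gap z = 0"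
  shows "AE y in \<mu>. y \<in> S \<and> r/2 < y \<bullet> n \<and> norm (z - y) < r \<longrightarrow>
    \<not> norm (y - e) \<le> r \<and> gap y = 0"
proof -
  have zn: "0 \<le> z \<bullet> n"
    using z(2) r_pos by linarith
  have nonneg: "0 \<le> gap_kernel z y" for y
    using gap_kernel_lower_bound[OF zn order.refl, of y] gap_nonneg by simp
  have "integral\<^sup>L \<mu> (gap_kernel z) = 0"
    using gap_equation[OF z(1) zn z(3)] zero by simp
  then have "AE y in \<mu>. gap_kernel z y = 0"
    using integral_nonneg_eq_0_iff_AE[OF integrable_gap_kernel] nonneg by simp
  then show ?thesis
  proof eventually_elim
    case (elim y)
    show ?case
    proof
      assume y: "y \<in> S \<and> r/2 < y \<bullet> n \<and> norm (z - y) < r"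
      then have "r < norm (z - \<sigma> y)"
        using norm_diff_reflection_gt[OF unit_n] r_pos z(2) by simp
      then have "gap y = 0"
        using elim y r_pos by (simp add: gap_kernel_def ball_kernel_def)
      moreover have "\<not> norm (y - e) \<le> r"
        using gap_on_cap[of y] y \<open>gap y = 0\<close> rho_pos by (auto simp: divide_le_0_iff)
      ultimately show "\<not> norm (y - e) \<le> r \<and> gap y = 0"
        by simp
    qed
  qed
qed

text \<open>Take a zero \<open>y\<close> of \<open>gap\<close> off the cap and above height
  \<open>r/2\<close> that almost maximises \<open>y \<bullet> e\<close>. Then \<open>gap\<close> vanishes a.e. on a small open cap just
  beyond \<open>y\<close> in direction \<open>e\<close>; its points can neither lie in the cap around \<open>e\<close>, where
  \<open>gap\<close> is bounded below, nor be further such zeros, by maximality. But that open cap has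
  positive measure.\<close>
lemma gap_pos:
  assumes x: "x \<in> S" "r/2 < x \<bullet> n" "\<not> norm (x - e) \<le> r"
  shows "0 < gap x"
proof (rule ccontr)
  assume "\<not> 0 < gap x"
  define Z where "Z = {y \<in> S. r/2 < y \<bullet> n \<and> \<not> norm (y - e) \<le> r \<and> gap y \<le> 0}"
  define s where "s = Sup ((\<lambda>y. y \<bullet> e) ` Z)"
  define \<kappa> where "\<kappa> = r^3 / (4 * (4 + r))"
  have "x \<in> Z"
    using x \<open>\<not> 0 < gap x\<close> by (simp add: Z_def)
  have "y \<bullet> e \<le> 1" if "y \<in> S" for y
    using Cauchy_Schwarz_ineq2[of y e] unit_e that by (simp add: abs_le_iff)
  then have bdd: "bdd_above ((\<lambda>y. y \<bullet> e) ` Z)"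
    by (intro bdd_aboveI[where M=1]) (auto simp: Z_def)
  have "0 < \<kappa>"
    using r_pos by (simp add: \<kappa>_def)
  then obtain y where "y \<in> Z" and y_e: "s - \<kappa> < y \<bullet> e"
    using less_cSupD[of "(\<lambda>y. y \<bullet> e) ` Z" "s - \<kappa>"] \<open>x \<in> Z\<close> unfolding s_def by force
  then have y: "y \<in> S" "r/2 < y \<bullet> n" "\<not> norm (y - e) \<le> r" and "gap y = 0"
    using gap_nonneg[of y] r_pos by (auto simp: Z_def)
  obtain p \<epsilon> where p: "norm p = 1" "0 < \<epsilon>"
    and ahead: "\<And>w. w \<in> ball p \<epsilon> \<Longrightarrow> r/2 < w \<bullet> n \<and> norm (y - w) < r \<and> y \<bullet> e + \<kappa> < w \<bullet> e"
    using sphere_ball_ahead[of y e n r] y unit_e unit_n r_pos e_n unfolding \<kappa>_def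
    by (auto simp: not_le)
  have "AE w in \<mu>. w \<notin> S \<inter> ball p \<epsilon>"
    using gap_zero_spreads[OF y \<open>gap y = 0\<close>]
  proof eventually_elim
    case (elim w)
    show ?case
    proof
      assume w: "w \<in> S \<inter> ball p \<epsilon>"
      then have "w \<in> Z"
        using elim ahead[of w] by (simp add: Z_def)
      then have "w \<bullet> e \<le> s"
        using bdd unfolding s_def by (intro cSup_upper) auto
      then show False
        using w ahead[of w] y_e by auto
    qed
  qed
  then have "emeasure \<mu> (S \<inter> ball p \<epsilon>) = 0"
    by (subst AE_iff_measurable[symmetric]) auto
  then show False
    using emeasure_sphere_uniform_cap_pos[OF p] by simp
qed

lemma v_reflection_less:
  assumes "x \<in> S" "r/2 < x \<bullet> n" "\<not> norm (x - e) \<le> r"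
  shows "v (\<sigma> x) < v x"
  using gap_pos[OF assms] by (simp add: gap_def)

end

context cap_equation
begin

lemma value_less_off_cap:
  assumes x: "x \<in> S" "x' \<in> S" "\<not> norm (x - e) \<le> r" and sep: "r < (x - x') \<bullet> e"
  shows "v x' < v x"
proof -
  define n where "n = sgn (x - x')"
  define d where "d = norm (x - x')"
  have "r < d"
    using sep Cauchy_Schwarz_ineq2[of "x - x'" e] unit_e by (simp add: d_def abs_le_iff)
  then have "x \<noteq> x'" "0 < d"
    using r_pos by (auto simp: d_def)
  have "d \<le> 2"
    using norm_triangle_ineq4[of x x'] x by (simp add: d_def)
  have "r/2 < e \<bullet> n"
  proof -
    have "r/2 \<le> r/d"
      using \<open>0 < d\<close> \<open>d \<le> 2\<close> r_pos by (simp add: divide_simps)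
    also have "\<dots> < ((x - x') \<bullet> e) / d"
      using sep \<open>0 < d\<close> by (simp add: divide_strict_right_mono)
    also have "\<dots> = e \<bullet> n"
      by (simp add: n_def d_def sgn_div_norm inner_commute divide_inverse_commute)
    finally show ?thesis .
  qed
  moreover have "norm n = 1"
    using \<open>x \<noteq> x'\<close> by (simp add: n_def norm_sgn)
  ultimately interpret cap_reflection r \<rho> v e n
    by unfold_locales
  have "2 * (x \<bullet> n) = d"
    using x inner_sgn_diff[of x x'] by (simp add: n_def d_def)
  then have "r/2 < x \<bullet> n"
    using \<open>r < d\<close> by simp
  moreover have "\<sigma> x = x'"
    using x reflection_sgn_diff[of x x'] by (simp add: n_def)
  ultimately show ?thesis
    using v_reflection_less[of x] x by simp
qed

lemma values_differ:
  assumes x: "x \<in> S" "x' \<in> S" and sep: "r < (x - x') \<bullet> e"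
  shows "v x \<noteq> v x'"
proof (cases "norm (x - e) \<le> r")
  case x_cap: True
  show ?thesis
  proof (cases "norm (x' - e) \<le> r")
    case True
    have "x \<bullet> e \<le> 1"
      using Cauchy_Schwarz_ineq2[of x e] unit_e x(1) by (simp add: abs_le_iff)
    then have "(x - x') \<bullet> e \<le> r\<^sup>2/2"
      using True unit_norm_diff_le_iff[of x' e r] x(2) unit_e r_pos by (simp add: inner_diff_left)
    moreover have "(x - x') \<bullet> e \<le> 2"
      using Cauchy_Schwarz_ineq2[of "x - x'" e] norm_triangle_ineq4[of x x'] unit_e x
      by (simp add: abs_le_iff)
    then have "r\<^sup>2/2 < r"
      using sep r_pos by (simp add: power2_eq_square)
    ultimately show ?thesis
      using sep by simp
  next
    case False
    then have "v x' \<le> 1 / (1 + \<rho>)"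
      using x by (simp add: v_off_cap_le)
    moreover have "1 / (1 + \<rho>) < 1"
      using rho_pos by simp
    ultimately show ?thesis
      using x x_cap by (simp add: v_on_cap)
  qed
next
  case False
  then show ?thesis
    using value_less_off_cap[OF x False sep] by simp
qed

end

section \<open>Injectivity\<close>

lemma chord_angle_ge:
  assumes "0 \<le> r" "r \<le> 2"
  shows "r \<le> chord_angle r"
proof -
  have "0 \<le> arcsin (r/2)"
    using assms by (simp add: arcsin_le_arcsin[of 0 "r/2", simplified])
  then have "sin (arcsin (r/2)) \<le> arcsin (r/2)"
    by (rule sin_x_le_x)
  then show ?thesis
    using assms by (simp add: chord_angle_def)
qed

lemma exists_component_gt:
  fixes x :: "real^'n::finite"
  assumes "c * sqrt (real CARD('n)) < norm x"
  obtains i where "c < \<bar>x $ i\<bar>"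
proof -
  have "{\<bar>x $ i\<bar> |i. i \<in> UNIV} = range (\<lambda>i. \<bar>x $ i\<bar>)"
    by auto
  then have "infnorm x \<in> range (\<lambda>i. \<bar>x $ i\<bar>)"
    unfolding infnorm_cart by (simp add: cSup_eq_Max Max_in)
  then obtain i where i: "infnorm x = \<bar>x $ i\<bar>"
    by blast
  have "c * sqrt (real CARD('n)) < sqrt (real CARD('n)) * \<bar>x $ i\<bar>"
    using assms norm_le_infnorm[of x] i by (simp add: order_less_le_trans)
  then have "c < \<bar>x $ i\<bar>"
    by (simp add: mult.commute)
  then show ?thesis
    using that by blast
qed

theorem theorem5:
  fixes r \<rho> :: real
    and v :: "'n::finite \<Rightarrow> real^'n \<Rightarrow> real"
  assumes dim: "CARD('n) \<ge> 2"
    and r: "0 < r" "r < 1"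
    and rho: "\<rho> > 0"
    and meas: "\<And>i. v i \<in> borel_measurable (sphere_uniform :: (real^'n) measure)"
    and range: "\<And>i x. x \<in> sphere 0 1 \<Longrightarrow> v i x \<in> {0..1}"
    and on_M: "\<And>i x. x \<in> sphere 0 1 \<Longrightarrow> norm (x - axis i 1) \<le> r \<Longrightarrow> v i x = 1"
    and off_M: "\<And>i x. x \<in> sphere 0 1 \<Longrightarrow> \<not> norm (x - axis i 1) \<le> r \<Longrightarrow>
        v i x =
          ((LINT y:{y \<in> sphere 0 1. norm (y - axis i 1) \<le> r}|sphere_uniform. ball_kernel r x y)
           + (LINT y:(sphere 0 1 - {y \<in> sphere 0 1. norm (y - axis i 1) \<le> r})|sphere_uniform.
                 v i y * ball_kernel r x y))
          / (\<rho> + (LINT y:sphere 0 1|sphere_uniform. ball_kernel r x y))"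
  shows "\<forall>x \<in> sphere 0 1. \<forall>x' \<in> sphere 0 1.
           norm (x - x') > chord_angle r * sqrt (real CARD('n)) \<longrightarrow>
           (\<chi> i. v i x) \<noteq> (\<chi> i. v i x')"
proof (intro ballI impI)
  fix x x' :: "real^'n"
  assume x: "x \<in> sphere 0 1" "x' \<in> sphere 0 1"
    and far: "chord_angle r * sqrt (real CARD('n)) < norm (x - x')"
  obtain i where i: "chord_angle r < \<bar>x $ i - x' $ i\<bar>"
    using exists_component_gt[OF far] by auto
  have "cap_equation r \<rho> (v i) (axis i 1)"
    using r rho meas range on_M off_M by unfold_locales auto
  then have differ: "v i y \<noteq> v i y'"
    if "y \<in> sphere 0 1" "y' \<in> sphere 0 1" "chord_angle r < y $ i - y' $ i" for y y'
    using cap_equation.values_differ[of r \<rho> "v i" "axis i 1" y y'] chord_angle_ge[of r] r that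
    by (simp add: inner_axis)
  have "v i x \<noteq> v i x'"
    using differ[OF x] differ[OF x(2,1)] i by (auto simp: abs_real_def split: if_splits)
  then show "(\<chi> i. v i x) \<noteq> (\<chi> i. v i x')"
    by (metis vec_lambda_beta)
qed

end
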